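(* Let $(\mathcal{L},\mathrm{Cn},\mathfrak{M})$ be an ideal logical system and let $\mathrm{FR}:2^{\mathfrak{M}}\to\mathcal{P}_{fin}(\mathcal{L})$ be a function with $\mathrm{Mod}(\mathrm{FR}(\mathbb{M}))=\mathbb{M}$ for every $\mathbb{M}\subseteq\mathfrak{M}$. Define $\mathcal{E}(\mathcal{B},M)\coloneqq\mathrm{FR}(\mathrm{Mod}(\mathcal{B})\cup[M]^{\mathcal{L}})$ for $\mathcal{B}\in\mathcal{P}_{fin}(\mathcal{L})$ and $M\in\mathfrak{M}$. Then for every $\mathcal{B}\in\mathcal{P}_{fin}(\mathcal{L})$ and $M\in\mathfrak{M}$: (success) $M\in\mathrm{Mod}(\mathcal{E}(\mathcal{B},M))$; (persistence) $\mathrm{Mod}(\mathcal{B})\subseteq\mathrm{Mod}(\mathcal{E}(\mathcal{B},M))$; (vacuity) if $M\in\mathrm{Mod}(\mathcal{B})$ then $\mathrm{Mod}(\mathcal{E}(\mathcal{B},M))=\mathrm{Mod}(\mathcal{B})$; (extensionality) if $M\equiv^{\mathcal{L}}M'$ then $\mathcal{E}(\mathcal{B},M)=\mathcal{E}(\mathcal{B},M')$.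
   Context: $\mathcal{L}$ is a language (set of formulae), $\mathfrak{M}$ a fixed set of models with a satisfaction relation $\models$ between models and formulae, and $\mathrm{Cn}$ a Tarskian consequence operator on $\mathcal{L}$. $\mathcal{P}_{fin}(\mathcal{L})$ is the set of finite subsets of $\mathcal{L}$. For $\mathcal{B}\subseteq\mathcal{L}$, $\mathrm{Mod}(\mathcal{B})=\{M\in\mathfrak{M}\mid M\models\varphi$ for all $\varphi\in\mathcal{B}\}$. $M\equiv^{\mathcal{L}}M'$ iff for all $\varphi\in\mathcal{L}$, $M\models\varphi$ iff $M'\models\varphi$; $[M]^{\mathcal{L}}=\{M'\in\mathfrak{M}\mid M'\equiv^{\mathcal{L}}M\}$. $(\mathcal{L},\mathrm{Cn},\mathfrak{M})$ is an ideal logical system if (1) for all $\mathcal{B}\subseteq\mathcal{L}$, $\varphi\in\mathcal{L}$: $\varphi\in\mathrm{Cn}(\mathcal{B})$ iff $\mathrm{Mod}(\mathcal{B})\subseteq\mathrm{Mod}(\{\varphi\})$, and (2) for every $\mathbb{M}\subseteq\mathfrak{M}$ there is a finite $\mathcal{B}\subseteq\mathcal{L}$ with $\mathrm{Mod}(\mathcal{B})=\mathbb{M}$. *)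

theory Defs
  imports Main
begin

text \<open>Language L = UNIV :: 'f set; models: the fixed set MM :: 'm set; sat M phi means M satisfies phi.\<close>

definition Mod :: "'m set \<Rightarrow> ('m \<Rightarrow> 'f \<Rightarrow> bool) \<Rightarrow> 'f set \<Rightarrow> 'm set" where
  "Mod MM sat B = {M \<in> MM. \<forall>\<phi>\<in>B. sat M \<phi>}"

definition equivL :: "('m \<Rightarrow> 'f \<Rightarrow> bool) \<Rightarrow> 'm \<Rightarrow> 'm \<Rightarrow> bool" where
  "equivL sat M M' \<longleftrightarrow> (\<forall>\<phi>. sat M \<phi> \<longleftrightarrow> sat M' \<phi>)"

definition eqclass :: "'m set \<Rightarrow> ('m \<Rightarrow> 'f \<Rightarrow> bool) \<Rightarrow> 'm \<Rightarrow> 'm set" where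
  "eqclass MM sat M = {M' \<in> MM. equivL sat M' M}"

definition tarskian :: "('f set \<Rightarrow> 'f set) \<Rightarrow> bool" where
  "tarskian Cn \<longleftrightarrow> (\<forall>A. A \<subseteq> Cn A) \<and> (\<forall>A B. A \<subseteq> B \<longrightarrow> Cn A \<subseteq> Cn B) \<and> (\<forall>A. Cn (Cn A) = Cn A)"

definition ideal_logical_system :: "('f set \<Rightarrow> 'f set) \<Rightarrow> 'm set \<Rightarrow> ('m \<Rightarrow> 'f \<Rightarrow> bool) \<Rightarrow> bool" where
  "ideal_logical_system Cn MM sat \<longleftrightarrow> tarskian Cn
     \<and> (\<forall>B \<phi>. \<phi> \<in> Cn B \<longleftrightarrow> Mod MM sat B \<subseteq> Mod MM sat {\<phi>})
     \<and> (\<forall>MS \<subseteq> MM. \<exists>B. finite B \<and> Mod MM sat B = MS)"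

definition E_op :: "'m set \<Rightarrow> ('m \<Rightarrow> 'f \<Rightarrow> bool) \<Rightarrow> ('m set \<Rightarrow> 'f set) \<Rightarrow> 'f set \<Rightarrow> 'm \<Rightarrow> 'f set" where
  "E_op MM sat FR B M = FR (Mod MM sat B \<union> eqclass MM sat M)"

end

theory Submission
  imports Defs
begin

lemma Mod_subset: "Mod MM sat B \<subseteq> MM"
  by (auto simp: Mod_def)

lemma eqclass_subset: "eqclass MM sat M \<subseteq> MM"
  by (auto simp: eqclass_def)

lemma self_in_eqclass: "M \<in> MM \<Longrightarrow> M \<in> eqclass MM sat M"
  by (simp add: eqclass_def equivL_def)

lemma eqclass_subset_Mod:
  assumes "M \<in> Mod MM sat B"
  shows "eqclass MM sat M \<subseteq> Mod MM sat B"
  using assms by (auto simp: eqclass_def equivL_def Mod_def)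

lemma eqclass_cong:
  assumes "equivL sat M M'"
  shows "eqclass MM sat M = eqclass MM sat M'"
  using assms by (auto simp: eqclass_def equivL_def)

lemma Mod_E_op:
  assumes "\<And>MS. MS \<subseteq> MM \<Longrightarrow> Mod MM sat (FR MS) = MS"
  shows "Mod MM sat (E_op MM sat FR B M) = Mod MM sat B \<union> eqclass MM sat M"
  unfolding E_op_def by (rule assms) (simp add: Mod_subset eqclass_subset)

text \<open>Ideality of the system and finiteness of \<open>FR\<close> only guarantee that a representation
  function \<open>FR\<close> exists; the four postulates follow from \<open>Mod (FR MS) = MS\<close> alone.\<close>

theorem mainTheorem8:
  fixes Cn :: "'f set \<Rightarrow> 'f set" and MM :: "'m set" and sat :: "'m \<Rightarrow> 'f \<Rightarrow> bool"
    and FR :: "'m set \<Rightarrow> 'f set"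
  assumes ideal: "ideal_logical_system Cn MM sat"
    and FR_fin: "\<And>MS. MS \<subseteq> MM \<Longrightarrow> finite (FR MS)"
    and FR_mod: "\<And>MS. MS \<subseteq> MM \<Longrightarrow> Mod MM sat (FR MS) = MS"
  shows "\<forall>B M. finite B \<and> M \<in> MM \<longrightarrow>
      M \<in> Mod MM sat (E_op MM sat FR B M)
    \<and> Mod MM sat B \<subseteq> Mod MM sat (E_op MM sat FR B M)
    \<and> (M \<in> Mod MM sat B \<longrightarrow> Mod MM sat (E_op MM sat FR B M) = Mod MM sat B)
    \<and> (\<forall>M'. M' \<in> MM \<and> equivL sat M M' \<longrightarrow> E_op MM sat FR B M = E_op MM sat FR B M')"
proof (intro allI impI conjI)
  fix B :: "'f set" and M :: 'm
  assume "finite B \<and> M \<in> MM"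
  then have "M \<in> MM" by simp
  have Mod_E: "Mod MM sat (E_op MM sat FR B M) = Mod MM sat B \<union> eqclass MM sat M"
    using FR_mod by (rule Mod_E_op)
  show "M \<in> Mod MM sat (E_op MM sat FR B M)"
    using \<open>M \<in> MM\<close> by (simp add: Mod_E self_in_eqclass)
  show "Mod MM sat B \<subseteq> Mod MM sat (E_op MM sat FR B M)"
    by (simp add: Mod_E)
  show "Mod MM sat (E_op MM sat FR B M) = Mod MM sat B" if "M \<in> Mod MM sat B"
    using eqclass_subset_Mod[OF that] by (auto simp: Mod_E)
  show "E_op MM sat FR B M = E_op MM sat FR B M'" if "M' \<in> MM \<and> equivL sat M M'" for M'
    using eqclass_cong[of sat M M' MM] that by (simp add: E_op_def)
qed

end
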